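(* Let $0<q<p\le1$ and $n\in\mathbb{N}$. For $x\in[0,1]$ and $i=0,1,2$ let $e_i(t)=t^i$. Then for all $x\in[0,1]$, $$\widetilde{M}_{n,k}^{(p,q)}(e_0;x)=1,$$ $$\frac{x}{q^2}\left(1-\frac{q+1}{[n]_{p,q}}\right)\le \widetilde{M}_{n,k}^{(p,q)}(e_1;x)\le \frac{x}{q}+\frac{p^n-q^nx}{q^2[n]_{p,q}},$$ $$\widetilde{M}_{n,k}^{(p,q)}(e_2;x)\le \frac{x^2}{q^2}+\frac{(p+q)^2}{q^5}\frac{(p^n-q^nx)}{[n]_{p,q}}x+\frac{p(p+q)}{q^6}\frac{(p^n-q^nx)(p^{n-1}-q^{n-1}x)}{[n]_{p,q}[n-1]_{p,q}}.$$
   Context: For $0<q<p\le1$: $[n]_{p,q}=\frac{p^n-q^n}{p-q}$; $[n]_{p,q}!=[1]_{p,q}\cdots[n]_{p,q}$, $[0]_{p,q}!=1$; $\begin{bmatrix}n\\k\end{bmatrix}_{p,q}=\frac{[n]_{p,q}!}{[k]_{p,q}![n-k]_{p,q}!}$; $(x+y)_{p,q}^n=\prod_{j=0}^{n-1}(p^jx+q^jy)$. The $(p,q)$-integral is $\int_0^a f(t)\,d_{p,q}t=(p-q)a\sum_{j=0}^\infty \frac{q^j}{p^{j+1}}f\!\left(\frac{q^j}{p^{j+1}}a\right)$. Define $m_{n,k}^{(p,q)}(x)=\frac{1}{p^{kn+n(n+1)/2}}\begin{bmatrix}n+k\\k\end{bmatrix}_{p,q}x^k(1-x)^{n+1}_{p,q}$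 and $b_{n,k}^{(p,q)}(qt)=\frac{1}{p^{k(n-1)+n(n-1)/2}}\begin{bmatrix}n+k+1\\k\end{bmatrix}_{p,q}(qt)^k(1-qt)^n_{p,q}$. The $(p,q)$-Meyer-König-Zeller Durrmeyer operator applied to $f$ defined on $[0,1]$ is $$\widetilde{M}_{n,k}^{(p,q)}(f;x)=\frac{[n+1]_{p,q}}{p^n}\sum_{k=0}^\infty m_{n,k}^{(p,q)}(x)\,(pq)^{-k}\int_0^1 b_{n,k}^{(p,q)}(qt)f(t)\,d_{p,q}t,\quad 0\le x<1,$$ and $\widetilde{M}_{n,k}^{(p,q)}(f;1)=f(1)$ (the subscript $k$ in the notation is just part of the name; $k$ is summed over). *)

theory Defs
  imports Complex_Main
begin

definition pq_int :: "real \<Rightarrow> real \<Rightarrow> nat \<Rightarrow> real" where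
  "pq_int p q n = (p ^ n - q ^ n) / (p - q)"

definition pq_fact :: "real \<Rightarrow> real \<Rightarrow> nat \<Rightarrow> real" where
  "pq_fact p q n = (\<Prod>j=1..n. pq_int p q j)"

definition pq_binom :: "real \<Rightarrow> real \<Rightarrow> nat \<Rightarrow> nat \<Rightarrow> real" where
  "pq_binom p q n k = pq_fact p q n / (pq_fact p q k * pq_fact p q (n - k))"

definition pq_pow :: "real \<Rightarrow> real \<Rightarrow> real \<Rightarrow> real \<Rightarrow> nat \<Rightarrow> real" where
  "pq_pow p q x y n = (\<Prod>j<n. p ^ j * x + q ^ j * y)"

definition pq_integral :: "real \<Rightarrow> real \<Rightarrow> (real \<Rightarrow> real) \<Rightarrow> real \<Rightarrow> real" where
  "pq_integral p q f a =
     (p - q) * a * (\<Sum>j. q ^ j / p ^ (j + 1) * f (q ^ j / p ^ (j + 1) * a))"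

definition mkz_m :: "real \<Rightarrow> real \<Rightarrow> nat \<Rightarrow> nat \<Rightarrow> real \<Rightarrow> real" where
  "mkz_m p q n k x =
     1 / p ^ (k * n + n * (n + 1) div 2) * pq_binom p q (n + k) k * x ^ k
       * pq_pow p q 1 (- x) (n + 1)"

text \<open>b_{n,k}^{(p,q)} evaluated at the argument u (the paper uses u = q t).\<close>
definition mkz_b :: "real \<Rightarrow> real \<Rightarrow> nat \<Rightarrow> nat \<Rightarrow> real \<Rightarrow> real" where
  "mkz_b p q n k u =
     1 / p ^ (k * (n - 1) + n * (n - 1) div 2) * pq_binom p q (n + k + 1) k * u ^ k
       * pq_pow p q 1 (- u) n"

definition mkz_durrmeyer :: "real \<Rightarrow> real \<Rightarrow> nat \<Rightarrow> (real \<Rightarrow> real) \<Rightarrow> real \<Rightarrow> real" where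
  "mkz_durrmeyer p q n f x =
     (if x = 1 then f 1
      else pq_int p q (n + 1) / p ^ n *
        (\<Sum>k. mkz_m p q n k x * (p * q) powi (- int k) *
              pq_integral p q (\<lambda>t. mkz_b p q n k (q * t) * f t) 1))"

end

theory Submission
  imports Defs
begin

text \<open>With \<open>r = q/p\<close> every (p,q)-quantity is a power of \<open>p\<close> times the corresponding
  r-quantity, and the (p,q)-integral against \<open>b\<^sub>n\<^sub>,\<^sub>k\<close> is an r-Beta sum. Hence the operator
  applied to \<open>t\<^sup>s\<close> equals \<open>p\<^sup>-\<^sup>s \<Sum>\<^sub>k m\<^sub>k(x) \<Prod>\<^sub>i\<^sub><\<^sub>s [k+1+i] / [n+k+2+i]\<close>, where the
  \<open>m\<^sub>k\<close> are the Meyer-Koenig-Zeller basis functions in \<open>r\<close>. They sum to \<open>1\<close> by the negative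
  q-binomial theorem, and index shifts give closed forms for \<open>\<Sum> m\<^sub>k [k]/[n+k]\<close> and a few
  similar weights. The factors \<open>[k+1]/[n+k+2]\<close> and \<open>[k+1][k+2]/([n+k+2][n+k+3])\<close> are
  bounded termwise by combinations of these weights, using \<open>[a+b] = [a] + r\<^sup>a[b] \<ge> r\<^sup>a[b]\<close>;
  for the lower bound \<open>p \<le> 1\<close> enters through \<open>(1 - p)[n] \<le> 1 + q - (p + q)p\<^sup>n\<^sup>-\<^sup>1\<close>.\<close>

lemma sums_linear_recurrence:
  fixes a b :: "nat \<Rightarrow> real"
  assumes b_sums: "b sums S" and c: "0 \<le> c" "c < 1"
    and a_0: "a 0 = b 0" and a_Suc: "\<And>k. a (Suc k) = c * a k + b (Suc k)"
    and a_nonneg: "\<And>k. 0 \<le> a k" and b_nonneg: "\<And>k. 0 \<le> b k"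
  shows "a sums (S / (1 - c))"
proof -
  have "sum a {..<n} \<le> S / (1 - c)" for n
  proof (induction n)
    case 0
    have "0 \<le> S"
      using b_sums b_nonneg by (auto simp: sums_iff intro: suminf_nonneg)
    then show ?case
      using c by simp
  next
    case (Suc n)
    have b_le: "sum b {..<Suc n} \<le> S"
      using sum_le_suminf[of b "{..<Suc n}"] b_sums b_nonneg by (auto simp: sums_iff)
    have "sum a {..<Suc n} = c * sum a {..<n} + sum b {..<Suc n}"
      unfolding sum.lessThan_Suc_shift a_Suc sum.distrib sum_distrib_left[symmetric]
      using a_0 by simp
    also have "\<dots> \<le> c * (S / (1 - c)) + S"
      using Suc c b_le by (intro add_mono mult_left_mono) auto
    also have "\<dots> = S / (1 - c)"
      using c by (simp add: field_simps)
    finally show ?case .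
  qed
  then have a_summable: "summable a"
    by (rule summableI_nonneg_bounded[OF a_nonneg])
  have "(\<lambda>k. a (Suc k)) sums (c * suminf a + (S - b 0))"
    unfolding a_Suc using a_summable b_sums
    by (intro sums_add sums_mult) (auto simp: sums_Suc_iff)
  then have "suminf a - a 0 = c * suminf a + (S - b 0)"
    using suminf_split_head[OF a_summable] by (simp add: sums_iff)
  then have "suminf a = S / (1 - c)"
    using a_0 c by (simp add: field_simps)
  then show ?thesis
    using a_summable by (simp add: sums_iff)
qed

section \<open>One-parameter q-calculus\<close>

definition qint :: "real \<Rightarrow> nat \<Rightarrow> real" where
  "qint r n = (1 - r ^ n) / (1 - r)"

text \<open>In q-Pochhammer notation, \<open>qpoch r a m = (r\<^sup>a; r)\<^sub>m\<close> and \<open>qpoch_at r x m = (x; r)\<^sub>m\<close>.\<close>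

definition qpoch :: "real \<Rightarrow> nat \<Rightarrow> nat \<Rightarrow> real" where
  "qpoch r a m = (\<Prod>i<m. 1 - r ^ (a + i))"

definition qpoch_at :: "real \<Rightarrow> real \<Rightarrow> nat \<Rightarrow> real" where
  "qpoch_at r x m = (\<Prod>i<m. 1 - r ^ i * x)"

definition qbinom :: "real \<Rightarrow> nat \<Rightarrow> nat \<Rightarrow> real" where
  "qbinom r m k = qpoch r 1 (m + k) / (qpoch r 1 k * qpoch r 1 m)"

lemma qint_0 [simp]: "qint r 0 = 0"
  by (simp add: qint_def)

lemma qpoch_0 [simp]: "qpoch r a 0 = 1"
  by (simp add: qpoch_def)

lemma qpoch_Suc: "qpoch r a (Suc m) = qpoch r a m * (1 - r ^ (a + m))"
  by (simp add: qpoch_def)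

lemma qpoch_Suc_left: "qpoch r a (Suc m) = (1 - r ^ a) * qpoch r (Suc a) m"
  unfolding qpoch_def prod.lessThan_Suc_shift by simp

lemma qpoch_add: "qpoch r a (m + l) = qpoch r a m * qpoch r (a + m) l"
  by (induction l) (simp_all add: qpoch_Suc add.assoc)

lemma qpoch_at_Suc: "qpoch_at r x (Suc m) = qpoch_at r x m * (1 - r ^ m * x)"
  by (simp add: qpoch_at_def)

text \<open>\<open>mkz_moment_factor r n s k = \<Prod>\<^sub>i\<^sub><\<^sub>s [k+1+i]\<^sub>r / [n+k+2+i]\<^sub>r\<close>: up to the factor
  \<open>p\<^sup>-\<^sup>s\<close>, the Durrmeyer integral of \<open>t\<^sup>s\<close> against the \<open>k\<close>-th kernel relative to that of \<open>t\<^sup>0\<close>.\<close>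

definition mkz_moment_factor :: "real \<Rightarrow> nat \<Rightarrow> nat \<Rightarrow> nat \<Rightarrow> real" where
  "mkz_moment_factor r n s k = qpoch r (Suc k) s / qpoch r (Suc (Suc n) + k) s"

lemma mkz_moment_factor_0 [simp]: "mkz_moment_factor r n 0 k = 1"
  by (simp add: mkz_moment_factor_def)

locale q_calculus =
  fixes r :: real
  assumes r_pos: "0 < r" and r_less_1: "r < 1"
begin

lemma power_less_1: "0 < n \<Longrightarrow> r ^ n < 1"
  using r_pos r_less_1 by (simp add: power_less_one_iff)

lemma one_minus_power_pos: "0 < n \<Longrightarrow> 0 < 1 - r ^ n"
  using power_less_1 by simp

lemma qint_pos: "0 < n \<Longrightarrow> 0 < qint r n"
  using one_minus_power_pos r_less_1 by (simp add: qint_def)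

lemma qint_nonneg: "0 \<le> qint r n"
  using qint_pos[of n] by (cases n) auto

lemma qint_add: "qint r (a + b) = qint r a + r ^ a * qint r b"
  using r_less_1 unfolding qint_def by (simp add: field_simps power_add)

lemma qint_Suc: "qint r (Suc k) = 1 + r * qint r k"
  using qint_add[of 1 k] r_less_1 by (simp add: qint_def)

lemma qint_Suc_Suc: "qint r (Suc (Suc k)) = (1 + r) + r\<^sup>2 * qint r k"
  using qint_add[of 2 k] r_less_1 by (simp add: qint_def field_simps power2_eq_square)

lemma qint_mono: "qint r a \<le> qint r (a + b)"
  using qint_add[of a b] qint_nonneg[of b] r_pos by simp

lemma power_mult_qint_le: "r ^ a * qint r b \<le> qint r (a + b)"
  using qint_add[of a b] qint_nonneg[of a] by simp

lemma qint_square: "qint r k * qint r k = qint r k + r * (qint r k * qint r (k - 1))"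
  by (cases k) (simp_all add: qint_Suc algebra_simps)

lemma qpoch_pos: "0 < a \<Longrightarrow> 0 < qpoch r a m"
  unfolding qpoch_def by (intro prod_pos) (simp add: power_less_1)

lemma qbinom_0_right [simp]: "qbinom r m 0 = 1"
  using qpoch_pos[of 1 m] by (simp add: qbinom_def)

lemma qbinom_0_left [simp]: "qbinom r 0 k = 1"
  using qpoch_pos[of 1 k] by (simp add: qbinom_def)

lemma qbinom_pos: "0 < qbinom r m k"
  unfolding qbinom_def by (intro divide_pos_pos mult_pos_pos qpoch_pos) auto

lemma qbinom_pascal:
  "qbinom r (Suc m) (Suc k) = r ^ Suc m * qbinom r (Suc m) k + qbinom r m (Suc k)"
proof -
  define A B D U V where "A = qpoch r 1 k" and "B = qpoch r 1 m"
    and "D = qpoch r 1 (Suc m + k)" and "U = 1 - r ^ Suc k" and "V = 1 - r ^ Suc m"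
  have top: "qpoch r 1 (Suc m + Suc k) = D * (V + (1 - V) * U)"
    by (simp add: qpoch_Suc D_def U_def V_def algebra_simps power_add)
  have "qpoch r 1 (m + Suc k) = D" "qpoch r 1 (Suc k) = A * U" "qpoch r 1 (Suc m) = B * V"
    by (simp_all add: qpoch_Suc A_def B_def D_def U_def V_def)
  moreover have "0 < A" "0 < B" "0 < D" "0 < U" "0 < V"
    unfolding A_def B_def D_def U_def V_def by (simp_all add: qpoch_pos power_less_1 del: power_Suc)
  moreover have "D * (V + (1 - V) * U) / (A * U * (B * V))
      = (1 - V) * (D / (A * (B * V))) + D / (A * U * B)"
    using calculation by (simp add: field_simps)
  moreover have "r ^ Suc m = 1 - V"
    by (simp add: V_def)
  ultimately show ?thesis
    unfolding qbinom_def top by (simp add: A_def B_def D_def)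
qed

lemma qbinom_Suc_ratio:
  "qbinom r m (Suc k) * qint r (Suc k) / qint r (m + Suc k) = qbinom r m k"
proof -
  define A B D U W R where "A = qpoch r 1 k" and "B = qpoch r 1 m" and "D = qpoch r 1 (m + k)"
    and "U = 1 - r ^ Suc k" and "W = 1 - r ^ Suc (m + k)" and "R = 1 - r"
  have "qpoch r 1 (m + Suc k) = D * W" "qpoch r 1 (Suc k) = A * U"
    by (simp_all add: qpoch_Suc A_def D_def U_def W_def)
  moreover have "0 < A" "0 < B" "0 < D" "0 < U" "0 < W" "0 < R"
    unfolding A_def B_def D_def U_def W_def R_def
    using r_less_1 by (simp_all add: qpoch_pos power_less_1 del: power_Suc)
  moreover have "D * W / (A * U * B) * (U / R) / (W / R) = D / (A * B)"
    using calculation by (simp add: field_simps)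
  ultimately show ?thesis
    unfolding qbinom_def qint_def by (simp add: A_def B_def D_def U_def W_def R_def)
qed

lemma qbinom_Suc_Suc_ratio:
  "qbinom r (Suc (Suc m)) k / (qint r (Suc (Suc m) + k) * qint r (Suc m + k))
     = qbinom r m k / (qint r (Suc (Suc m)) * qint r (Suc m))"
proof -
  define A B D U1 U2 W1 W2 R where "A = qpoch r 1 k" and "B = qpoch r 1 m"
    and "D = qpoch r 1 (m + k)" and "U1 = 1 - r ^ Suc m" and "U2 = 1 - r ^ Suc (Suc m)"
    and "W1 = 1 - r ^ Suc (m + k)" and "W2 = 1 - r ^ Suc (Suc (m + k))" and "R = 1 - r"
  have "qpoch r 1 (Suc (Suc m) + k) = D * W1 * W2" "qpoch r 1 (Suc (Suc m)) = B * U1 * U2"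
    by (simp_all add: qpoch_Suc B_def D_def U1_def U2_def W1_def W2_def)
  moreover have "0 < A" "0 < B" "0 < D" "0 < U1" "0 < U2" "0 < W1" "0 < W2" "0 < R"
    unfolding A_def B_def D_def U1_def U2_def W1_def W2_def R_def
    using r_less_1 by (simp_all add: qpoch_pos power_less_1 del: power_Suc)
  moreover have "D * W1 * W2 / (A * (B * U1 * U2)) / (W2 / R * (W1 / R))
      = D / (A * B) / (U2 / R * (U1 / R))"
    using calculation by (simp add: field_simps)
  ultimately show ?thesis
    unfolding qbinom_def qint_def
    by (simp add: A_def B_def D_def U1_def U2_def W1_def W2_def R_def)
qed

lemma power_mult_less_1: "0 \<le> x \<Longrightarrow> x < 1 \<Longrightarrow> r ^ m * x < 1"
  using r_pos r_less_1 by (meson le_less_trans mult_left_le_one_le power_le_one zero_le_power less_imp_le)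

lemma qpoch_at_pos: "0 \<le> x \<Longrightarrow> x < 1 \<Longrightarrow> 0 < qpoch_at r x m"
  unfolding qpoch_at_def by (intro prod_pos) (simp add: power_mult_less_1)

text \<open>The negative q-binomial theorem: by the Pascal rule the coefficients for \<open>m + 1\<close> arise
  from those for \<open>m\<close> through \<open>sums_linear_recurrence\<close> with \<open>c = r\<^sup>m\<^sup>+\<^sup>1 x\<close>.\<close>

lemma qbinom_generating_function:
  assumes x: "0 \<le> x" "x < 1"
  shows "(\<lambda>k. qbinom r m k * x ^ k) sums (1 / qpoch_at r x (Suc m))"
proof (induction m)
  case 0
  have "(\<lambda>k. x ^ k) sums (1 / (1 - x))"
    using x by (intro geometric_sums) simp
  then show ?case
    by (simp add: qpoch_at_def)
next
  case (Suc m)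
  define c where "c = r ^ Suc m * x"
  have c: "0 \<le> c" "c < 1"
    using x r_pos power_mult_less_1[OF x, of "Suc m"] by (simp_all add: c_def del: power_Suc)
  have "(\<lambda>k. qbinom r (Suc m) k * x ^ k) sums (1 / qpoch_at r x (Suc m) / (1 - c))"
  proof (rule sums_linear_recurrence[OF Suc c])
    show "qbinom r (Suc m) (Suc k) * x ^ Suc k = c * (qbinom r (Suc m) k * x ^ k) + qbinom r m (Suc k) * x ^ Suc k"
      for k
      using qbinom_pascal[of m k] by (simp add: c_def algebra_simps)
    show "0 \<le> qbinom r (Suc m) k * x ^ k" "0 \<le> qbinom r m k * x ^ k" for k
      using qbinom_pos[of "Suc m" k] qbinom_pos[of m k] x by simp_all
  qed simp
  then show ?case
    by (simp add: c_def qpoch_at_Suc[of r x "Suc m"])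
qed

lemma qpoch_ratio_step:
  assumes "0 < a"
  shows "qpoch r 1 n / qpoch r a (Suc n) - r ^ Suc n * (qpoch r 1 n / qpoch r (Suc a) (Suc n))
    = qpoch r 1 (Suc n) / qpoch r a (Suc (Suc n))"
proof -
  define U X W t where "U = 1 - r ^ a" and "X = qpoch r (Suc a) n"
    and "W = 1 - r ^ (Suc a + n)" and "t = r ^ Suc n"
  have "qpoch r a (Suc n) = U * X"
    by (simp add: qpoch_Suc_left U_def X_def)
  moreover have "qpoch r (Suc a) (Suc n) = X * W" "qpoch r 1 (Suc n) = qpoch r 1 n * (1 - t)"
    by (simp_all add: qpoch_Suc X_def W_def t_def)
  moreover have "qpoch r a (Suc (Suc n)) = U * (X * W)"
    by (simp only: qpoch_Suc_left[of r a "Suc n"] qpoch_Suc[of r "Suc a" n])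
      (simp add: U_def X_def W_def)
  ultimately have eqs: "qpoch r a (Suc n) = U * X" "qpoch r (Suc a) (Suc n) = X * W"
    "qpoch r 1 (Suc n) = qpoch r 1 n * (1 - t)" "qpoch r a (Suc (Suc n)) = U * (X * W)"
    by blast+
  have "0 < U" "0 < X" "0 < W"
    unfolding U_def X_def W_def using assms by (simp_all add: power_less_1 qpoch_pos del: power_Suc)
  moreover have W: "W = 1 - (1 - U) * t"
    by (simp add: U_def W_def t_def power_add)
  ultimately show ?thesis
    unfolding t_def[symmetric] eqs by (simp add: field_simps) (simp add: W algebra_simps)
qed

text \<open>The r-form of the (p,q)-Beta integral.\<close>

lemma q_beta_sums:
  "0 < a \<Longrightarrow> (\<lambda>j. r ^ (j * a) * qpoch r (Suc j) n) sums (qpoch r 1 n / qpoch r a (Suc n))"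
proof (induction n arbitrary: a)
  case 0
  have "(\<lambda>j. (r ^ a) ^ j) sums (1 / (1 - r ^ a))"
    using 0 r_pos power_less_1 by (intro geometric_sums) simp
  then show ?case
    by (simp add: qpoch_def power_mult[symmetric] mult.commute)
next
  case (Suc n)
  have split: "r ^ (j * a) * qpoch r (Suc j) (Suc n)
      = r ^ (j * a) * qpoch r (Suc j) n - r ^ Suc n * (r ^ (j * Suc a) * qpoch r (Suc j) n)" for j
  proof -
    have shift: "r ^ (j * a) * r ^ (Suc j + n) = r ^ Suc n * r ^ (j * Suc a)"
      by (simp add: power_add[symmetric] algebra_simps)
    have "r ^ (j * a) * qpoch r (Suc j) (Suc n)
        = r ^ (j * a) * qpoch r (Suc j) n - (r ^ (j * a) * r ^ (Suc j + n)) * qpoch r (Suc j) n"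
      by (simp only: qpoch_Suc) (simp add: algebra_simps)
    then show ?thesis
      unfolding shift by (simp add: algebra_simps)
  qed
  have "(\<lambda>j. r ^ (j * a) * qpoch r (Suc j) (Suc n))
      sums (qpoch r 1 n / qpoch r a (Suc n) - r ^ Suc n * (qpoch r 1 n / qpoch r (Suc a) (Suc n)))"
    unfolding split using Suc by (intro sums_diff sums_mult Suc.IH) auto
  then show ?case
    unfolding qpoch_ratio_step[OF Suc.prems] .
qed

lemma qpoch_at_power: "qpoch_at r (r ^ a) m = qpoch r a m"
  unfolding qpoch_at_def qpoch_def by (simp add: power_add mult.commute)

lemma prod_qint_eq: "(\<Prod>j=1..N. qint r j) = qpoch r 1 N / (1 - r) ^ N"
proof (induction N)
  case (Suc N)
  then show ?case
    using r_less_1 by (simp add: prod.nat_ivl_Suc' qint_def qpoch_Suc field_simps)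
qed simp

lemma mkz_moment_factor_1: "mkz_moment_factor r n 1 k = qint r (Suc k) / qint r (Suc (Suc n) + k)"
  using r_less_1 by (simp add: mkz_moment_factor_def qint_def qpoch_def)

lemma mkz_moment_factor_2:
  "mkz_moment_factor r n 2 k
     = qint r (Suc k) * qint r (Suc (Suc k)) / (qint r (Suc (Suc n) + k) * qint r (Suc (Suc (Suc n) + k)))"
proof -
  have two: "qpoch r a 2 = (1 - r ^ a) * (1 - r ^ Suc a)" for a
    by (simp add: qpoch_def numeral_2_eq_2)
  have "c \<noteq> 0 \<Longrightarrow> d \<noteq> 0 \<Longrightarrow> R \<noteq> 0 \<Longrightarrow> a * b / (c * d) = (a / R) * (b / R) / ((c / R) * (d / R))"
    for a b c d R :: real
    by (simp add: field_simps)
  moreover have "0 < 1 - r ^ (Suc (Suc n) + k)" "0 < 1 - r ^ Suc (Suc (Suc n) + k)"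
    by (simp_all add: power_less_1 del: power_Suc)
  ultimately show ?thesis
    unfolding mkz_moment_factor_def two qint_def using r_less_1 by auto
qed

lemma mkz_moment_factor_nonneg: "0 \<le> mkz_moment_factor r n s k"
  using qpoch_pos[of "Suc k" s] qpoch_pos[of "Suc (Suc n) + k" s] by (simp add: mkz_moment_factor_def)

lemma mkz_moment_factor_le_1: "mkz_moment_factor r n s k \<le> 1"
proof -
  have "qpoch r (Suc k) s \<le> qpoch r (Suc (Suc n) + k) s"
    unfolding qpoch_def
  proof (rule prod_mono)
    fix i
    have "r ^ (Suc (Suc n) + k + i) \<le> r ^ (Suc k + i)"
      using r_pos r_less_1 by (intro power_decreasing) auto
    then show "0 \<le> 1 - r ^ (Suc k + i) \<and> 1 - r ^ (Suc k + i) \<le> 1 - r ^ (Suc (Suc n) + k + i)"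
      using power_less_1[of "Suc k + i"] by simp
  qed
  then show ?thesis
    using qpoch_pos[of "Suc (Suc n) + k" s] by (simp add: mkz_moment_factor_def)
qed

lemma mkz_moment_factor_eq:
  "qint r (Suc n) * ((1 - r) * qbinom r (Suc n) k * (qpoch r 1 n / qpoch r (Suc (k + s)) (Suc n)))
     = mkz_moment_factor r n s k"
proof -
  define A B C D E F where "A = qpoch r 1 k" and "B = qpoch r (Suc k) s"
    and "C = qpoch r (Suc (k + s)) (Suc n)" and "D = qpoch r 1 (Suc n + k)"
    and "E = qpoch r (Suc (Suc n) + k) s" and "F = qpoch r 1 n"
  have "A * B * C = qpoch r 1 (k + s + Suc n)"
    unfolding A_def B_def C_def qpoch_add by simp
  also have "\<dots> = qpoch r 1 (Suc n + k + s)"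
    by (simp add: ac_simps)
  also have "\<dots> = D * E"
    unfolding D_def E_def qpoch_add by simp
  finally have ABC: "A * B * C = D * E" .
  have pos: "0 < A" "0 < B" "0 < C" "0 < D" "0 < E" "0 < F" "0 < 1 - r ^ Suc n" "0 < 1 - r"
    unfolding A_def B_def C_def D_def E_def F_def
    using r_less_1 by (simp_all add: qpoch_pos power_less_1 del: power_Suc)
  have "qint r (Suc n) * ((1 - r) * qbinom r (Suc n) k * (qpoch r 1 n / qpoch r (Suc (k + s)) (Suc n)))
      = (1 - r ^ Suc n) * (D / (A * (F * (1 - r ^ Suc n))) * (F / C))"
    unfolding qint_def qbinom_def using pos by (simp add: qpoch_Suc A_def D_def F_def C_def del: power_Suc)
  also have "\<dots> = D / (A * C)"
    using pos by (simp add: field_simps)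
  also have "\<dots> = B / E"
    using pos ABC by (simp add: field_simps)
  finally show ?thesis
    by (simp add: mkz_moment_factor_def B_def E_def)
qed

lemma mkz_moment_factor_1_le:
  "mkz_moment_factor r (Suc m) 1 k
     \<le> 1 / r * (qint r k / qint r (Suc m + k)) + 1 / r\<^sup>2 * (1 / qint r (Suc m + k))"
proof -
  define A where "A = qint r (Suc m + k)"
  have A: "0 < A"
    by (simp add: A_def qint_pos)
  have "r\<^sup>2 * A \<le> qint r (Suc (Suc (Suc m)) + k)"
    using power_mult_qint_le[of 2 "Suc m + k"] by (simp add: A_def numeral_2_eq_2)
  then have "qint r (Suc k) / qint r (Suc (Suc (Suc m)) + k) \<le> qint r (Suc k) / (r\<^sup>2 * A)"
    using A r_pos qint_nonneg[of "Suc k"] qint_pos[of "Suc (Suc (Suc m)) + k"]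
    by (intro divide_left_mono) auto
  also have "\<dots> = 1 / r * (qint r k / A) + 1 / r\<^sup>2 * (1 / A)"
    unfolding qint_Suc using A r_pos by (simp add: field_simps power2_eq_square)
  finally show ?thesis
    unfolding mkz_moment_factor_1 A_def .
qed

lemma mkz_moment_factor_1_ge:
  "1 / r\<^sup>2 * (qint r k / qint r (Suc m + k))
     - (1 + r) / r\<^sup>2 * (qint r k / (qint r (Suc m + k) * qint r (m + k)))
   \<le> mkz_moment_factor r (Suc m) 1 k"
proof (cases k)
  case 0
  then show ?thesis
    using mkz_moment_factor_nonneg by simp
next
  case (Suc j)
  define A B C K where "A = qint r (Suc m + k)" and "B = qint r (Suc (Suc (Suc m)) + k)"
    and "C = qint r (m + k)" and "K = qint r k"
  have pos: "0 < A" "0 < C" "0 \<le> K"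
    unfolding A_def C_def K_def using Suc by (simp_all add: qint_pos qint_nonneg)
  have B: "B = (1 + r) + r\<^sup>2 * A"
    using qint_Suc_Suc[of "Suc m + k"] by (simp add: A_def B_def)
  have C_le_B: "C \<le> B"
    using qint_mono[of "m + k" "Suc (Suc (Suc 0))"] by (simp add: B_def C_def add.commute add.left_commute)
  have "(C - (1 + r)) * B = C * (B - (1 + r)) + (1 + r) * (C - B)"
    by (simp add: algebra_simps)
  also have "\<dots> = r\<^sup>2 * A * C + (1 + r) * (C - B)"
    using B by (simp add: algebra_simps)
  also have "\<dots> \<le> r\<^sup>2 * A * C"
    using C_le_B r_pos by (simp add: mult_nonneg_nonpos)
  finally have key: "(C - (1 + r)) * B \<le> r\<^sup>2 * A * C" .
  have B_pos: "0 < B"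
    using B r_pos pos by (simp add: add_pos_nonneg)
  have "K * ((C - (1 + r)) * B) \<le> K * (r\<^sup>2 * A * C)"
    using key pos by (intro mult_left_mono) auto
  then have "K * (C - (1 + r)) / (r\<^sup>2 * A * C) \<le> K / B"
    using B_pos pos r_pos by (simp add: divide_le_eq le_divide_eq field_simps)
  moreover have "1 / r\<^sup>2 * (K / A) - (1 + r) / r\<^sup>2 * (K / (A * C)) = K * (C - (1 + r)) / (r\<^sup>2 * A * C)"
    using pos r_pos by (simp add: field_simps)
  ultimately have "1 / r\<^sup>2 * (K / A) - (1 + r) / r\<^sup>2 * (K / (A * C)) \<le> K / B"
    by simp
  also have "\<dots> \<le> qint r (Suc k) / B"
    using qint_mono[of k 1] B_pos by (intro divide_right_mono) (simp_all add: K_def)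
  finally show ?thesis
    unfolding mkz_moment_factor_1 A_def B_def C_def K_def .
qed

lemma qint_Suc_mult_qint_Suc_Suc:
  "qint r (Suc k) * qint r (Suc (Suc k))
     = (1 + r) + (r + 2 * r\<^sup>2 + r ^ 3) * qint r k + r ^ 4 * (qint r k * qint r (k - 1))"
proof -
  have "qint r (Suc k) * qint r (Suc (Suc k)) = (1 + r * qint r k) * ((1 + r) + r\<^sup>2 * qint r k)"
    unfolding qint_Suc_Suc[of k] qint_Suc[of k] ..
  also have "\<dots> = (1 + r) + (r + 2 * r\<^sup>2) * qint r k + r ^ 3 * (qint r k * qint r k)"
    by (simp add: algebra_simps power2_eq_square eval_nat_numeral)
  also have "\<dots> = (1 + r) + (r + 2 * r\<^sup>2 + r ^ 3) * qint r k + r ^ 4 * (qint r k * qint r (k - 1))"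
    unfolding qint_square by (simp add: algebra_simps eval_nat_numeral)
  finally show ?thesis .
qed

lemma mkz_moment_factor_2_le:
  "mkz_moment_factor r (Suc (Suc m)) 2 k
     \<le> ((1 + r) + (r + 2 * r\<^sup>2 + r ^ 3) * qint r k + r ^ 4 * (qint r k * qint r (k - 1)))
         / (r ^ 6 * (qint r (Suc (Suc m) + k) * qint r (Suc m + k)))"
proof -
  define A C B1 B2 where "A = qint r (Suc (Suc m) + k)" and "C = qint r (Suc m + k)"
    and "B1 = qint r (Suc (Suc (Suc (Suc m))) + k)" and "B2 = qint r (Suc (Suc (Suc (Suc (Suc m))) + k))"
  have pos: "0 < A" "0 < C"
    by (simp_all add: A_def C_def qint_pos)
  have "r\<^sup>2 * A \<le> B1" "r ^ 4 * C \<le> B2"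
    using power_mult_qint_le[of 2 "Suc (Suc m) + k"] power_mult_qint_le[of 4 "Suc m + k"]
    by (simp_all add: A_def B1_def C_def B2_def eval_nat_numeral)
  moreover have "0 < r\<^sup>2 * A" "0 < r ^ 4 * C"
    using pos r_pos by simp_all
  ultimately have "r\<^sup>2 * A * (r ^ 4 * C) \<le> B1 * B2" "0 < r\<^sup>2 * A * (r ^ 4 * C)"
    by (simp_all add: mult_mono')
  moreover have "r\<^sup>2 * A * (r ^ 4 * C) = r ^ 6 * (A * C)"
    by (simp add: power_add[symmetric] ac_simps)
  moreover have "0 \<le> qint r (Suc k) * qint r (Suc (Suc k))"
    using qint_nonneg by simp
  ultimately have "qint r (Suc k) * qint r (Suc (Suc k)) / (B1 * B2)
      \<le> qint r (Suc k) * qint r (Suc (Suc k)) / (r ^ 6 * (A * C))"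
    by (metis divide_left_mono mult_pos_pos less_le_trans)
  then show ?thesis
    unfolding mkz_moment_factor_2 qint_Suc_mult_qint_Suc_Suc[symmetric] A_def C_def B1_def B2_def
    by simp
qed

end

section \<open>Moments of the basis functions\<close>

definition mkz_basis :: "real \<Rightarrow> nat \<Rightarrow> nat \<Rightarrow> real \<Rightarrow> real" where
  "mkz_basis r n k x = qbinom r n k * x ^ k * qpoch_at r x (Suc n)"

locale mkz_point = q_calculus +
  fixes x :: real
  assumes x_nonneg: "0 \<le> x" and x_less_1: "x < 1"
begin

lemma sums_mkz_basis: "(\<lambda>k. mkz_basis r n k x) sums 1"
proof -
  have "(\<lambda>k. qbinom r n k * x ^ k * qpoch_at r x (Suc n))
      sums (1 / qpoch_at r x (Suc n) * qpoch_at r x (Suc n))"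
    by (intro sums_mult2 qbinom_generating_function x_nonneg x_less_1)
  then show ?thesis
    using qpoch_at_pos[OF x_nonneg x_less_1, of "Suc n"] by (simp add: mkz_basis_def)
qed

lemma mkz_basis_nonneg: "0 \<le> mkz_basis r n k x"
  using qbinom_pos[of n k] qpoch_at_pos[OF x_nonneg x_less_1, of "Suc n"] x_nonneg
  by (simp add: mkz_basis_def)

lemma mkz_basis_Suc_ratio:
  "mkz_basis r n (Suc k) x * qint r (Suc k) / qint r (n + Suc k) = x * mkz_basis r n k x"
proof -
  have "mkz_basis r n (Suc k) x * qint r (Suc k) / qint r (n + Suc k)
      = (qbinom r n (Suc k) * qint r (Suc k) / qint r (n + Suc k)) * x * (x ^ k * qpoch_at r x (Suc n))"
    by (simp add: mkz_basis_def)
  also have "\<dots> = x * mkz_basis r n k x"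
    by (subst qbinom_Suc_ratio) (simp add: mkz_basis_def)
  finally show ?thesis .
qed

text \<open>Each of the following sums is reduced to a known one by shifting \<open>k\<close> with
  \<open>mkz_basis_Suc_ratio\<close>, or by splitting \<open>1 / [n+k]\<close> via \<open>[n+k] = [n] + r\<^sup>n [k]\<close>.\<close>

lemma sums_mkz_basis_qint_ratio:
  "(\<lambda>k. mkz_basis r n k x * qint r k / qint r (n + k)) sums x"
proof (rule sums_Suc_imp)
  have "(\<lambda>k. x * mkz_basis r n k x) sums (x * 1)"
    by (intro sums_mult sums_mkz_basis)
  then show "(\<lambda>k. mkz_basis r n (Suc k) x * qint r (Suc k) / qint r (n + Suc k)) sums x"
    unfolding mkz_basis_Suc_ratio by simp
qed simp

lemma sums_mkz_basis_div_qint: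
  "(\<lambda>k. mkz_basis r (Suc m) k x / qint r (Suc m + k))
     sums ((1 - r ^ Suc m * x) / qint r (Suc m))"
proof -
  define n where "n = Suc m"
  have qn: "0 < qint r n"
    by (simp add: qint_pos n_def)
  have split: "mkz_basis r n k x / qint r (n + k)
      = mkz_basis r n k x / qint r n - r ^ n / qint r n * (mkz_basis r n k x * qint r k / qint r (n + k))" for k
  proof -
    have "M / D = M / A - s / A * (M * B / D)" if "0 < A" "0 < D" "D = A + s * B" for M A D s B :: real
    proof -
      have "M / A - s / A * (M * B / D) = (M * D - s * M * B) / (A * D)"
        using that(1,2) by (simp add: field_simps)
      also have "\<dots> = (M * A) / (A * D)"
        using that(3) by (simp add: algebra_simps)
      also have "\<dots> = M / D"
        using that(1) by simp
      finally show ?thesis ..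
    qed
    moreover have "0 < qint r (n + k)"
      by (simp add: qint_pos n_def)
    ultimately show ?thesis
      using qn qint_add[of n k] by blast
  qed
  have "(\<lambda>k. mkz_basis r n k x / qint r n - r ^ n / qint r n * (mkz_basis r n k x * qint r k / qint r (n + k)))
      sums (1 / qint r n - r ^ n / qint r n * x)"
    by (intro sums_diff sums_mult sums_divide sums_mkz_basis sums_mkz_basis_qint_ratio)
  then have "(\<lambda>k. mkz_basis r n k x / qint r (n + k)) sums ((1 - r ^ n * x) / qint r n)"
    unfolding split[symmetric] by (simp add: diff_divide_distrib)
  then show ?thesis
    by (simp add: n_def)
qed

lemma sums_mkz_basis_div_qint2:
  "(\<lambda>k. mkz_basis r (Suc (Suc m)) k x / (qint r (Suc (Suc m) + k) * qint r (Suc m + k)))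
     sums ((1 - r ^ Suc m * x) * (1 - r ^ Suc (Suc m) * x) / (qint r (Suc (Suc m)) * qint r (Suc m)))"
proof -
  define C where "C = (1 - r ^ Suc m * x) * (1 - r ^ Suc (Suc m) * x) / (qint r (Suc (Suc m)) * qint r (Suc m))"
  have "mkz_basis r (Suc (Suc m)) k x / (qint r (Suc (Suc m) + k) * qint r (Suc m + k))
      = mkz_basis r m k x * C" for k
  proof -
    have "mkz_basis r (Suc (Suc m)) k x / (qint r (Suc (Suc m) + k) * qint r (Suc m + k))
        = (qbinom r (Suc (Suc m)) k / (qint r (Suc (Suc m) + k) * qint r (Suc m + k)))
            * x ^ k * qpoch_at r x (Suc (Suc (Suc m)))"
      by (simp add: mkz_basis_def)
    also have "\<dots> = mkz_basis r m k x * C"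
      unfolding qbinom_Suc_Suc_ratio mkz_basis_def C_def
        qpoch_at_Suc[of r x "Suc (Suc m)"] qpoch_at_Suc[of r x "Suc m"]
      by (simp add: ac_simps)
    finally show ?thesis .
  qed
  moreover have "(\<lambda>k. mkz_basis r m k x * C) sums (1 * C)"
    by (intro sums_mult2 sums_mkz_basis)
  ultimately show ?thesis
    by (simp add: C_def)
qed

lemma sums_mkz_basis_qint_ratio2:
  "(\<lambda>k. mkz_basis r (Suc m) k x * qint r k / (qint r (Suc m + k) * qint r (m + k)))
     sums (x * ((1 - r ^ Suc m * x) / qint r (Suc m)))"
proof (rule sums_Suc_imp)
  have "(\<lambda>k. x * (mkz_basis r (Suc m) k x / qint r (Suc m + k)))
      sums (x * ((1 - r ^ Suc m * x) / qint r (Suc m)))"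
    by (intro sums_mult sums_mkz_basis_div_qint)
  then have "(\<lambda>k. (mkz_basis r (Suc m) (Suc k) x * qint r (Suc k) / qint r (Suc m + Suc k))
        / qint r (Suc m + k)) sums (x * ((1 - r ^ Suc m * x) / qint r (Suc m)))"
    unfolding mkz_basis_Suc_ratio by simp
  then show "(\<lambda>k. mkz_basis r (Suc m) (Suc k) x * qint r (Suc k)
        / (qint r (Suc m + Suc k) * qint r (m + Suc k))) sums (x * ((1 - r ^ Suc m * x) / qint r (Suc m)))"
    by (simp add: divide_divide_eq_left)
qed simp

lemma sums_mkz_basis_qint_prod_ratio:
  "(\<lambda>k. mkz_basis r (Suc (Suc m)) k x * qint r k * qint r (k - 1)
        / (qint r (Suc (Suc m) + k) * qint r (Suc m + k)))
     sums (x * x)"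
proof (rule sums_Suc_imp)
  have "(\<lambda>k. x * (mkz_basis r (Suc (Suc m)) k x * qint r k / qint r (Suc (Suc m) + k))) sums (x * x)"
    by (intro sums_mult sums_mkz_basis_qint_ratio)
  then have "(\<lambda>k. (mkz_basis r (Suc (Suc m)) (Suc k) x * qint r (Suc k) / qint r (Suc (Suc m) + Suc k))
        * qint r k / qint r (Suc (Suc m) + k)) sums (x * x)"
    unfolding mkz_basis_Suc_ratio by (simp add: mult.assoc)
  then show "(\<lambda>k. mkz_basis r (Suc (Suc m)) (Suc k) x * qint r (Suc k) * qint r (Suc k - 1)
        / (qint r (Suc (Suc m) + Suc k) * qint r (Suc m + Suc k))) sums (x * x)"
    by (simp add: divide_divide_eq_left)
qed simp

lemma summable_mkz_moment:
  "summable (\<lambda>k. mkz_basis r n k x * mkz_moment_factor r n s k)"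
proof (rule summable_comparison_test'[where g = "\<lambda>k. mkz_basis r n k x"])
  show "summable (\<lambda>k. mkz_basis r n k x)"
    using sums_mkz_basis by (simp add: sums_iff)
  show "norm (mkz_basis r n k x * mkz_moment_factor r n s k) \<le> mkz_basis r n k x" for k
    using mkz_basis_nonneg[of n k] mkz_moment_factor_nonneg[of n s k] mkz_moment_factor_le_1[of n s k]
    by (simp add: abs_mult mult_left_le)
qed

lemma mkz_moment1_le:
  "(\<Sum>k. mkz_basis r (Suc m) k x * mkz_moment_factor r (Suc m) 1 k)
     \<le> 1 / r * x + 1 / r\<^sup>2 * ((1 - r ^ Suc m * x) / qint r (Suc m))"
proof (rule sums_le)
  show "mkz_basis r (Suc m) k x * mkz_moment_factor r (Suc m) 1 k
      \<le> 1 / r * (mkz_basis r (Suc m) k x * qint r k / qint r (Suc m + k))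
        + 1 / r\<^sup>2 * (mkz_basis r (Suc m) k x / qint r (Suc m + k))" for k
  proof -
    have "mkz_basis r (Suc m) k x * mkz_moment_factor r (Suc m) 1 k
        \<le> mkz_basis r (Suc m) k x * (1 / r * (qint r k / qint r (Suc m + k)) + 1 / r\<^sup>2 * (1 / qint r (Suc m + k)))"
      using mkz_moment_factor_1_le mkz_basis_nonneg by (rule mult_left_mono)
    then show ?thesis
      by (simp add: algebra_simps)
  qed
  show "(\<lambda>k. mkz_basis r (Suc m) k x * mkz_moment_factor r (Suc m) 1 k)
      sums (\<Sum>k. mkz_basis r (Suc m) k x * mkz_moment_factor r (Suc m) 1 k)"
    by (intro summable_sums summable_mkz_moment)
  show "(\<lambda>k. 1 / r * (mkz_basis r (Suc m) k x * qint r k / qint r (Suc m + k))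
        + 1 / r\<^sup>2 * (mkz_basis r (Suc m) k x / qint r (Suc m + k)))
      sums (1 / r * x + 1 / r\<^sup>2 * ((1 - r ^ Suc m * x) / qint r (Suc m)))"
    by (intro sums_add sums_mult sums_mkz_basis_qint_ratio sums_mkz_basis_div_qint)
qed

lemma mkz_moment1_ge:
  "1 / r\<^sup>2 * x - (1 + r) / r\<^sup>2 * (x * ((1 - r ^ Suc m * x) / qint r (Suc m)))
     \<le> (\<Sum>k. mkz_basis r (Suc m) k x * mkz_moment_factor r (Suc m) 1 k)"
proof (rule sums_le)
  show "1 / r\<^sup>2 * (mkz_basis r (Suc m) k x * qint r k / qint r (Suc m + k))
        - (1 + r) / r\<^sup>2 * (mkz_basis r (Suc m) k x * qint r k / (qint r (Suc m + k) * qint r (m + k)))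
      \<le> mkz_basis r (Suc m) k x * mkz_moment_factor r (Suc m) 1 k" for k
  proof -
    have "mkz_basis r (Suc m) k x * (1 / r\<^sup>2 * (qint r k / qint r (Suc m + k))
          - (1 + r) / r\<^sup>2 * (qint r k / (qint r (Suc m + k) * qint r (m + k))))
        \<le> mkz_basis r (Suc m) k x * mkz_moment_factor r (Suc m) 1 k"
      using mkz_moment_factor_1_ge mkz_basis_nonneg by (rule mult_left_mono)
    then show ?thesis
      by (simp add: algebra_simps)
  qed
  show "(\<lambda>k. 1 / r\<^sup>2 * (mkz_basis r (Suc m) k x * qint r k / qint r (Suc m + k))
        - (1 + r) / r\<^sup>2 * (mkz_basis r (Suc m) k x * qint r k / (qint r (Suc m + k) * qint r (m + k))))
      sums (1 / r\<^sup>2 * x - (1 + r) / r\<^sup>2 * (x * ((1 - r ^ Suc m * x) / qint r (Suc m))))"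
    by (intro sums_diff sums_mult sums_mkz_basis_qint_ratio sums_mkz_basis_qint_ratio2)
  show "(\<lambda>k. mkz_basis r (Suc m) k x * mkz_moment_factor r (Suc m) 1 k)
      sums (\<Sum>k. mkz_basis r (Suc m) k x * mkz_moment_factor r (Suc m) 1 k)"
    by (intro summable_sums summable_mkz_moment)
qed

lemma mkz_moment2_le:
  "(\<Sum>k. mkz_basis r (Suc (Suc m)) k x * mkz_moment_factor r (Suc (Suc m)) 2 k)
     \<le> (1 + r) / r ^ 6 * ((1 - r ^ Suc m * x) * (1 - r ^ Suc (Suc m) * x)
            / (qint r (Suc (Suc m)) * qint r (Suc m)))
       + (r + 2 * r\<^sup>2 + r ^ 3) / r ^ 6 * (x * ((1 - r ^ Suc (Suc m) * x) / qint r (Suc (Suc m))))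
       + 1 / r\<^sup>2 * (x * x)"
proof (rule sums_le)
  fix k
  define b D where "b = mkz_basis r (Suc (Suc m)) k x"
    and "D = qint r (Suc (Suc m) + k) * qint r (Suc m + k)"
  have "b * mkz_moment_factor r (Suc (Suc m)) 2 k
      \<le> b * (((1 + r) + (r + 2 * r\<^sup>2 + r ^ 3) * qint r k + r ^ 4 * (qint r k * qint r (k - 1))) / (r ^ 6 * D))"
    unfolding b_def D_def using mkz_moment_factor_2_le mkz_basis_nonneg by (rule mult_left_mono)
  also have "\<dots> = (1 + r) / r ^ 6 * (b / D) + (r + 2 * r\<^sup>2 + r ^ 3) / r ^ 6 * (b * qint r k / D)
      + 1 / r\<^sup>2 * (b * qint r k * qint r (k - 1) / D)"
    using r_pos qint_pos[of "Suc (Suc m) + k"] qint_pos[of "Suc m + k"]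
    by (simp add: D_def field_simps eval_nat_numeral)
  finally show "b * mkz_moment_factor r (Suc (Suc m)) 2 k \<le> \<dots>" .
next
  show "(\<lambda>k. mkz_basis r (Suc (Suc m)) k x * mkz_moment_factor r (Suc (Suc m)) 2 k)
      sums (\<Sum>k. mkz_basis r (Suc (Suc m)) k x * mkz_moment_factor r (Suc (Suc m)) 2 k)"
    by (intro summable_sums summable_mkz_moment)
  show "(\<lambda>k. (1 + r) / r ^ 6 * (mkz_basis r (Suc (Suc m)) k x / (qint r (Suc (Suc m) + k) * qint r (Suc m + k)))
        + (r + 2 * r\<^sup>2 + r ^ 3) / r ^ 6
          * (mkz_basis r (Suc (Suc m)) k x * qint r k / (qint r (Suc (Suc m) + k) * qint r (Suc m + k)))
        + 1 / r\<^sup>2 * (mkz_basis r (Suc (Suc m)) k x * qint r k * qint r (k - 1)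
            / (qint r (Suc (Suc m) + k) * qint r (Suc m + k))))
      sums ((1 + r) / r ^ 6 * ((1 - r ^ Suc m * x) * (1 - r ^ Suc (Suc m) * x)
            / (qint r (Suc (Suc m)) * qint r (Suc m)))
       + (r + 2 * r\<^sup>2 + r ^ 3) / r ^ 6 * (x * ((1 - r ^ Suc (Suc m) * x) / qint r (Suc (Suc m))))
       + 1 / r\<^sup>2 * (x * x))"
    by (intro sums_add sums_mult sums_mkz_basis_div_qint2 sums_mkz_basis_qint_ratio2[of "Suc m"]
        sums_mkz_basis_qint_prod_ratio)
qed

end

section \<open>Reduction from (p,q) to \<open>r = q/p\<close>\<close>

lemma Suc_choose_two: "Suc n choose 2 = (n choose 2) + n"
  by (simp add: numeral_2_eq_2)

lemma add_choose_two: "(m + k) choose 2 = (m choose 2) + (k choose 2) + m * k"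
  by (induction k) (simp_all add: Suc_choose_two)

lemma pq_int_Suc: "p \<noteq> q \<Longrightarrow> pq_int p q (Suc n) = p ^ n + q * pq_int p q n"
  unfolding pq_int_def by (simp add: field_simps)

locale pq_scaling =
  fixes p q r :: real
  assumes q_pos: "0 < q" and q_less_p: "q < p" and r_def: "r = q / p"
begin

lemma p_pos: "0 < p"
  using q_pos q_less_p by simp

lemma q_eq: "q = r * p"
  using p_pos by (simp add: r_def)

sublocale q_calculus r
  using q_pos q_less_p by unfold_locales (auto simp: r_def field_simps)

lemma pq_int_eq: "pq_int p q n = p ^ (n - 1) * qint r n"
proof (cases n)
  case (Suc m)
  have "pq_int p q n = p ^ n * (1 - r ^ n) / (p * (1 - r))"
    unfolding pq_int_def q_eq by (simp add: power_mult_distrib algebra_simps)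
  also have "\<dots> = p ^ m * qint r n"
    using p_pos r_less_1 by (simp add: Suc qint_def field_simps)
  finally show ?thesis
    by (simp add: Suc)
qed (simp add: pq_int_def)

lemma pq_fact_eq: "pq_fact p q N = p ^ (N choose 2) * (\<Prod>j=1..N. qint r j)"
proof (induction N)
  case (Suc N)
  have "pq_fact p q (Suc N) = pq_int p q (Suc N) * pq_fact p q N"
    unfolding pq_fact_def by (simp add: prod.nat_ivl_Suc')
  then show ?case
    unfolding Suc pq_int_eq by (simp add: prod.nat_ivl_Suc' Suc_choose_two power_add)
qed (simp add: pq_fact_def choose_two)

lemma pq_binom_eq: "pq_binom p q (m + k) k = p ^ (m * k) * qbinom r m k"
proof -
  have "pq_binom p q (m + k) k
      = p ^ ((m + k) choose 2) * (\<Prod>j=1..m + k. qint r j)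
        / (p ^ (k choose 2) * (\<Prod>j=1..k. qint r j) * (p ^ (m choose 2) * (\<Prod>j=1..m. qint r j)))"
    unfolding pq_binom_def pq_fact_eq by simp
  also have "\<dots> = p ^ (m * k) * qbinom r m k"
    unfolding add_choose_two prod_qint_eq qbinom_def power_add
    using p_pos r_less_1 qpoch_pos[of 1 k] qpoch_pos[of 1 m] by (simp add: field_simps)
  finally show ?thesis .
qed

lemma pq_pow_eq: "pq_pow p q 1 (- u) n = p ^ (n choose 2) * qpoch_at r u n"
proof (induction n)
  case (Suc n)
  have "p ^ n - q ^ n * u = p ^ n * (1 - r ^ n * u)"
    unfolding q_eq by (simp add: power_mult_distrib algebra_simps)
  then show ?case
    using Suc by (simp add: pq_pow_def qpoch_at_def Suc_choose_two power_add)
qed (simp add: pq_pow_def qpoch_at_def choose_two)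

lemma mkz_m_eq: "mkz_m p q n k x = mkz_basis r n k x"
proof -
  have "n * (n + 1) div 2 = Suc n choose 2"
    by (simp add: choose_two mult.commute)
  then have "mkz_m p q n k x
      = 1 / p ^ (k * n + (Suc n choose 2)) * (p ^ (n * k) * qbinom r n k) * x ^ k
        * (p ^ (Suc n choose 2) * qpoch_at r x (Suc n))"
    unfolding mkz_m_def pq_binom_eq[symmetric] pq_pow_eq[symmetric] by (simp add: add.commute)
  also have "\<dots> = mkz_basis r n k x"
    unfolding mkz_basis_def power_add using p_pos by (simp add: field_simps)
  finally show ?thesis .
qed

lemma mkz_b_eq:
  assumes "1 \<le> n"
  shows "mkz_b p q n k u = p ^ (2 * k) * qbinom r (Suc n) k * u ^ k * qpoch_at r u n"
proof -
  have e: "n + k + 1 = Suc n + k"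
    by simp
  have e2: "Suc n * k = k * (n - 1) + 2 * k"
    using assms by (cases n) (auto simp: algebra_simps)
  have "mkz_b p q n k u
      = 1 / p ^ (k * (n - 1) + (n choose 2)) * (p ^ (Suc n * k) * qbinom r (Suc n) k) * u ^ k
        * (p ^ (n choose 2) * qpoch_at r u n)"
    unfolding mkz_b_def e pq_binom_eq pq_pow_eq choose_two[symmetric] by simp
  also have "\<dots> = p ^ (2 * k) * qbinom r (Suc n) k * u ^ k * qpoch_at r u n"
    unfolding e2 power_add using p_pos by (simp add: field_simps)
  finally show ?thesis .
qed

text \<open>The (p,q)-integral samples at the points \<open>q\<^sup>j/p\<^sup>j\<^sup>+\<^sup>1 = r\<^sup>j/p\<close>, so it becomes the
  series of \<open>q_beta_sums\<close>.\<close>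

lemma pq_integral_mkz_b_power:
  assumes n: "1 \<le> n"
  shows "pq_integral p q (\<lambda>t. mkz_b p q n k (q * t) * t ^ s) 1
    = (p - q) * (p ^ (2 * k) * qbinom r (Suc n) k * r ^ k / p ^ (s + 1))
        * (qpoch r 1 n / qpoch r (Suc (k + s)) (Suc n))"
proof -
  define C where "C = p ^ (2 * k) * qbinom r (Suc n) k * r ^ k / p ^ (s + 1)"
  have "q ^ j / p ^ (j + 1) * (mkz_b p q n k (q * (q ^ j / p ^ (j + 1))) * (q ^ j / p ^ (j + 1)) ^ s)
      = C * (r ^ (j * Suc (k + s)) * qpoch r (Suc j) n)" for j
  proof -
    have node: "q ^ j / p ^ (j + 1) = r ^ j / p" and arg: "q * (r ^ j / p) = r ^ Suc j"
      using p_pos by (simp_all add: r_def power_divide)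
    show ?thesis
      unfolding node arg mkz_b_eq[OF n] qpoch_at_power C_def
      using p_pos by (simp add: power_mult_distrib power_add power_mult[symmetric] field_simps)
  qed
  moreover have "(\<lambda>j. C * (r ^ (j * Suc (k + s)) * qpoch r (Suc j) n))
      sums (C * (qpoch r 1 n / qpoch r (Suc (k + s)) (Suc n)))"
    by (intro sums_mult q_beta_sums) simp
  ultimately show ?thesis
    unfolding pq_integral_def C_def by (simp add: sums_iff)
qed

lemma mkz_durrmeyer_term_eq:
  assumes n: "1 \<le> n"
  shows "mkz_m p q n k x * (p * q) powi (- int k) * pq_integral p q (\<lambda>t. mkz_b p q n k (q * t) * t ^ s) 1
    = mkz_basis r n k x * mkz_moment_factor r n s k / (qint r (Suc n) * p ^ s)"
proof -
  define P Q where "P = (p * q) powi (- int k) * ((p - q) * (p ^ (2 * k) * r ^ k / p ^ (s + 1)))"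
    and "Q = qbinom r (Suc n) k * (qpoch r 1 n / qpoch r (Suc (k + s)) (Suc n))"
  have P: "P = (1 - r) / p ^ s"
    unfolding P_def power_int_minus power_int_of_nat q_eq mult_2 power_add
    using p_pos r_pos by (simp add: power_mult_distrib power_add field_simps)
  have Q: "(1 - r) * Q = mkz_moment_factor r n s k / qint r (Suc n)"
    using mkz_moment_factor_eq[of n k s] qint_pos[of "Suc n"] by (simp add: Q_def field_simps)
  have "mkz_m p q n k x * (p * q) powi (- int k) * pq_integral p q (\<lambda>t. mkz_b p q n k (q * t) * t ^ s) 1
      = mkz_basis r n k x * P * Q"
    unfolding pq_integral_mkz_b_power[OF n] mkz_m_eq P_def Q_def by (simp add: divide_inverse ac_simps)
  also have "\<dots> = mkz_basis r n k x * ((1 - r) * Q) / p ^ s"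
    unfolding P by simp
  finally show ?thesis
    unfolding Q by simp
qed

lemma mkz_durrmeyer_power_eq:
  assumes n: "1 \<le> n" and x: "0 \<le> x" "x < 1"
  shows "mkz_durrmeyer p q n (\<lambda>t. t ^ s) x
    = (\<Sum>k. mkz_basis r n k x * mkz_moment_factor r n s k) / p ^ s"
proof -
  interpret mkz_point r x
    using x by unfold_locales
  define V where "V = (\<Sum>k. mkz_basis r n k x * mkz_moment_factor r n s k)"
  have qn: "0 < qint r (Suc n)"
    by (simp add: qint_pos)
  have "(\<lambda>k. mkz_basis r n k x * mkz_moment_factor r n s k / (qint r (Suc n) * p ^ s))
      sums (V / (qint r (Suc n) * p ^ s))"
    unfolding V_def by (intro sums_divide summable_sums summable_mkz_moment)
  then have "(\<Sum>k. mkz_m p q n k x * (p * q) powi (- int k)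
        * pq_integral p q (\<lambda>t. mkz_b p q n k (q * t) * t ^ s) 1) = V / (qint r (Suc n) * p ^ s)"
    unfolding mkz_durrmeyer_term_eq[OF n] by (simp add: sums_iff)
  moreover have "pq_int p q (n + 1) / p ^ n = qint r (Suc n)"
    using p_pos by (simp add: pq_int_eq)
  ultimately show ?thesis
    unfolding mkz_durrmeyer_def V_def[symmetric] using x qn by simp
qed

lemma pq_int_pos: "0 < n \<Longrightarrow> 0 < pq_int p q n"
  using p_pos qint_pos by (simp add: pq_int_eq)

lemma q_power_le_p_power: "q ^ k \<le> p ^ k"
  using q_pos q_less_p by (intro power_mono) auto

lemma mkz_durrmeyer_const:
  assumes "1 \<le> n" "0 \<le> x" "x \<le> 1"
  shows "mkz_durrmeyer p q n (\<lambda>t. 1) x = 1"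
proof (cases "x = 1")
  case False
  then interpret mkz_point r x
    using assms by unfold_locales auto
  show ?thesis
    using mkz_durrmeyer_power_eq[OF assms(1,2), of 0] False assms(3) sums_mkz_basis by (simp add: sums_iff)
qed (simp add: mkz_durrmeyer_def)

lemma mkz_durrmeyer_id_le_below_1:
  assumes "0 \<le> x" "x < 1"
  shows "mkz_durrmeyer p q (Suc m) (\<lambda>t. t) x
    \<le> x / q + (p ^ Suc m - q ^ Suc m * x) / (q\<^sup>2 * pq_int p q (Suc m))"
proof -
  interpret mkz_point r x
    using assms by unfold_locales
  have "mkz_durrmeyer p q (Suc m) (\<lambda>t. t) x
      = (\<Sum>k. mkz_basis r (Suc m) k x * mkz_moment_factor r (Suc m) 1 k) / p"
    using mkz_durrmeyer_power_eq[OF _ assms, of "Suc m" 1] by simp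
  also have "\<dots> \<le> (1 / r * x + 1 / r\<^sup>2 * ((1 - r ^ Suc m * x) / qint r (Suc m))) / p"
    using mkz_moment1_le p_pos by (intro divide_right_mono) auto
  also have "\<dots> = x / q + (p ^ Suc m - q ^ Suc m * x) / (q\<^sup>2 * pq_int p q (Suc m))"
    unfolding pq_int_eq unfolding q_eq using p_pos r_pos qint_pos[of "Suc m"]
    by (simp add: power_mult_distrib field_simps power2_eq_square)
  finally show ?thesis .
qed

lemma mkz_durrmeyer_square_le_below_1:
  assumes "0 \<le> x" "x < 1"
  shows "mkz_durrmeyer p q (Suc (Suc m)) (\<lambda>t. t\<^sup>2) x
    \<le> x\<^sup>2 / q\<^sup>2 + (p + q)\<^sup>2 / q ^ 5 * ((p ^ Suc (Suc m) - q ^ Suc (Suc m) * x) / pq_int p q (Suc (Suc m))) * x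
      + p * (p + q) / q ^ 6 * ((p ^ Suc (Suc m) - q ^ Suc (Suc m) * x) * (p ^ Suc m - q ^ Suc m * x))
          / (pq_int p q (Suc (Suc m)) * pq_int p q (Suc m))"
proof -
  interpret mkz_point r x
    using assms by unfold_locales
  have "mkz_durrmeyer p q (Suc (Suc m)) (\<lambda>t. t\<^sup>2) x
      = (\<Sum>k. mkz_basis r (Suc (Suc m)) k x * mkz_moment_factor r (Suc (Suc m)) 2 k) / p\<^sup>2"
    using mkz_durrmeyer_power_eq[OF _ assms, of "Suc (Suc m)" 2] by simp
  also have "\<dots> \<le> ((1 + r) / r ^ 6 * ((1 - r ^ Suc m * x) * (1 - r ^ Suc (Suc m) * x)
            / (qint r (Suc (Suc m)) * qint r (Suc m)))
       + (r + 2 * r\<^sup>2 + r ^ 3) / r ^ 6 * (x * ((1 - r ^ Suc (Suc m) * x) / qint r (Suc (Suc m))))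
       + 1 / r\<^sup>2 * (x * x)) / p\<^sup>2"
    using mkz_moment2_le p_pos by (intro divide_right_mono) auto
  also have "\<dots> = x\<^sup>2 / q\<^sup>2 + (p + q)\<^sup>2 / q ^ 5 * ((p ^ Suc (Suc m) - q ^ Suc (Suc m) * x) / pq_int p q (Suc (Suc m))) * x
      + p * (p + q) / q ^ 6 * ((p ^ Suc (Suc m) - q ^ Suc (Suc m) * x) * (p ^ Suc m - q ^ Suc m * x))
          / (pq_int p q (Suc (Suc m)) * pq_int p q (Suc m))"
    unfolding pq_int_eq unfolding q_eq using p_pos r_pos qint_pos[of "Suc m"] qint_pos[of "Suc (Suc m)"]
    by (simp add: power_mult_distrib field_simps power2_eq_square eval_nat_numeral)
  finally show ?thesis .
qed

end

section \<open>The estimates for \<open>p \<le> 1\<close>\<close>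

locale pq_unit = pq_scaling +
  assumes p_le_1: "p \<le> 1"
begin

lemma q_less_1: "q < 1"
  using q_less_p p_le_1 by simp

lemma one_minus_q_mult_pq_int_le: "(1 - q) * pq_int p q n \<le> 1"
proof (induction n)
  case (Suc n)
  have "(1 - q) * pq_int p q (Suc n) = (1 - q) * p ^ n + q * ((1 - q) * pq_int p q n)"
    using q_less_p by (simp add: pq_int_Suc algebra_simps)
  also have "\<dots> \<le> (1 - q) * 1 + q * 1"
    using Suc q_pos q_less_1 p_pos p_le_1 by (intro add_mono mult_left_mono power_le_one) auto
  finally show ?case
    by simp
qed (simp add: pq_int_def)

lemma one_minus_p_mult_pq_int_le: "(1 - p) * pq_int p q (Suc m) \<le> 1 + q - (p + q) * p ^ m"
proof (induction m)
  case 0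
  then show ?case
    using q_less_p by (simp add: pq_int_def)
next
  case (Suc m)
  have "1 + q - (p + q) * p ^ Suc m - (1 - p) * pq_int p q (Suc (Suc m))
      = p * (1 + q - (p + q) * p ^ m - (1 - p) * pq_int p q (Suc m)) + (1 - p) * (1 + q - q ^ Suc m)"
    using q_less_p unfolding pq_int_Suc[of p q "Suc m"] pq_int_def by (simp add: field_simps)
  moreover have "0 \<le> p * (1 + q - (p + q) * p ^ m - (1 - p) * pq_int p q (Suc m))"
    using Suc p_pos by simp
  moreover have "q ^ Suc m \<le> q"
    using q_pos q_less_1 by (simp add: mult_left_le power_le_one)
  then have "0 \<le> (1 - p) * (1 + q - q ^ Suc m)"
    using p_le_1 q_pos by (intro mult_nonneg_nonneg) linarith+
  ultimately show ?case
    by linarith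
qed

lemma mkz_durrmeyer_id_ge_below_1:
  assumes x: "0 \<le> x" "x < 1"
  shows "x / q\<^sup>2 * (1 - (q + 1) / pq_int p q (Suc m)) \<le> mkz_durrmeyer p q (Suc m) (\<lambda>t. t) x"
proof -
  interpret mkz_point r x
    using x by unfold_locales
  define Q where "Q = qint r (Suc m)"
  have "x * (1 - r ^ Suc m * x) \<le> x * 1"
    using r_pos x by (intro mult_left_mono) auto
  moreover have "0 < Q"
    by (simp add: Q_def qint_pos)
  ultimately have Q: "0 < Q" "x * (1 - r ^ Suc m * x) / Q \<le> x / Q"
    by (simp_all add: divide_right_mono)
  define F where "F = 1 + r * p - (p + r * p) * p ^ m - (1 - p) * (p ^ m * Q)"
  have "0 \<le> F"
    using one_minus_p_mult_pq_int_le[of m, unfolded pq_int_eq, unfolded q_eq] by (simp add: F_def Q_def)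
  then have "0 \<le> x / (r * p)\<^sup>2 * (F / (p ^ m * Q))"
    using x p_pos Q by simp
  moreover have "(x / r\<^sup>2 - (1 + r) / r\<^sup>2 * (x / Q)) / p - x / (r * p)\<^sup>2 * (1 - (r * p + 1) / (p ^ m * Q))
      = x / (r * p)\<^sup>2 * (F / (p ^ m * Q))"
    unfolding F_def using p_pos r_pos Q by (simp add: field_simps power2_eq_square)
  ultimately have "x / q\<^sup>2 * (1 - (q + 1) / pq_int p q (Suc m)) \<le> (x / r\<^sup>2 - (1 + r) / r\<^sup>2 * (x / Q)) / p"
    unfolding pq_int_eq Q_def[symmetric] unfolding q_eq by simp
  also have "\<dots> \<le> (x / r\<^sup>2 - (1 + r) / r\<^sup>2 * (x * ((1 - r ^ Suc m * x) / Q))) / p"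
    using Q r_pos p_pos by (intro divide_right_mono diff_left_mono mult_left_mono) auto
  also have "\<dots> \<le> (\<Sum>k. mkz_basis r (Suc m) k x * mkz_moment_factor r (Suc m) 1 k) / p"
    using mkz_moment1_ge p_pos unfolding Q_def by (intro divide_right_mono) auto
  also have "\<dots> = mkz_durrmeyer p q (Suc m) (\<lambda>t. t) x"
    using mkz_durrmeyer_power_eq[OF _ x, of "Suc m" 1] by simp
  finally show ?thesis .
qed

lemma mkz_durrmeyer_id_le:
  assumes "1 \<le> n" "0 \<le> x" "x \<le> 1"
  shows "mkz_durrmeyer p q n (\<lambda>t. t) x \<le> x / q + (p ^ n - q ^ n * x) / (q\<^sup>2 * pq_int p q n)"
proof -
  obtain m where n: "n = Suc m"
    using assms(1) by (cases n) auto
  show ?thesis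
  proof (cases "x = 1")
    case True
    have "0 \<le> (p ^ n - q ^ n) / (q\<^sup>2 * pq_int p q n)"
      using q_pos q_power_le_p_power[of n] pq_int_pos[of n] n by (intro divide_nonneg_pos) auto
    moreover have "1 \<le> 1 / q"
      using q_pos q_less_1 by simp
    ultimately show ?thesis
      using True by (simp add: mkz_durrmeyer_def)
  next
    case False
    then show ?thesis
      using mkz_durrmeyer_id_le_below_1[of x m] assms n by simp
  qed
qed

lemma mkz_durrmeyer_id_ge:
  assumes "1 \<le> n" "0 \<le> x" "x \<le> 1"
  shows "x / q\<^sup>2 * (1 - (q + 1) / pq_int p q n) \<le> mkz_durrmeyer p q n (\<lambda>t. t) x"
proof -
  obtain m where n: "n = Suc m"
    using assms(1) by (cases n) auto
  show ?thesis
  proof (cases "x = 1")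
    case True
    have "(q + 1) * (1 - q) \<le> (q + 1) * (1 / pq_int p q n)"
      using one_minus_q_mult_pq_int_le[of n] pq_int_pos[of n] n q_pos
      by (intro mult_left_mono) (simp_all add: le_divide_eq mult.commute)
    then have "1 / q\<^sup>2 * (1 - (q + 1) / pq_int p q n) \<le> 1 / q\<^sup>2 * q\<^sup>2"
      using q_pos by (intro mult_left_mono) (simp_all add: algebra_simps power2_eq_square)
    then show ?thesis
      using True q_pos by (simp add: mkz_durrmeyer_def)
  next
    case False
    then show ?thesis
      using mkz_durrmeyer_id_ge_below_1[of x m] assms n by simp
  qed
qed

lemma mkz_durrmeyer_square_le:
  assumes "2 \<le> n" "0 \<le> x" "x \<le> 1"
  shows "mkz_durrmeyer p q n (\<lambda>t. t\<^sup>2) x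
    \<le> x\<^sup>2 / q\<^sup>2 + (p + q)\<^sup>2 / q ^ 5 * ((p ^ n - q ^ n * x) / pq_int p q n) * x
      + p * (p + q) / q ^ 6 * ((p ^ n - q ^ n * x) * (p ^ (n - 1) - q ^ (n - 1) * x))
          / (pq_int p q n * pq_int p q (n - 1))"
proof -
  obtain m where n: "n = Suc (Suc m)"
    using assms(1) by (cases n; cases "n - 1") auto
  show ?thesis
  proof (cases "x = 1")
    case True
    have "0 \<le> (p + q)\<^sup>2 / q ^ 5 * ((p ^ n - q ^ n) / pq_int p q n)"
      "0 \<le> p * (p + q) / q ^ 6 * ((p ^ n - q ^ n) * (p ^ (n - 1) - q ^ (n - 1)))
          / (pq_int p q n * pq_int p q (n - 1))"
      using q_pos p_pos q_power_le_p_power[of n] q_power_le_p_power[of "n - 1"]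
        pq_int_pos[of n] pq_int_pos[of "n - 1"] n
      by (intro divide_nonneg_pos mult_nonneg_nonneg mult_pos_pos; simp)+
    moreover have "1 \<le> 1 / q\<^sup>2"
      using q_pos q_less_1 by (simp add: power_le_one)
    ultimately show ?thesis
      using True by (simp add: mkz_durrmeyer_def)
  next
    case False
    then show ?thesis
      using mkz_durrmeyer_square_le_below_1[of x m] assms n by simp
  qed
qed

end

theorem theorem1:
  fixes p q :: real and n :: nat
  assumes "0 < q" "q < p" "p \<le> 1" "n \<ge> 1"
  shows "\<forall>x\<in>{0..1}.
     mkz_durrmeyer p q n (\<lambda>t. 1) x = 1
   \<and> x / q\<^sup>2 * (1 - (q + 1) / pq_int p q n) \<le> mkz_durrmeyer p q n (\<lambda>t. t) x
   \<and> mkz_durrmeyer p q n (\<lambda>t. t) x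
       \<le> x / q + (p ^ n - q ^ n * x) / (q\<^sup>2 * pq_int p q n)
   \<and> (n \<ge> 2 \<longrightarrow> mkz_durrmeyer p q n (\<lambda>t. t\<^sup>2) x
       \<le> x\<^sup>2 / q\<^sup>2 + (p + q)\<^sup>2 / q ^ 5 * ((p ^ n - q ^ n * x) / pq_int p q n) * x
         + p * (p + q) / q ^ 6 * ((p ^ n - q ^ n * x) * (p ^ (n - 1) - q ^ (n - 1) * x))
             / (pq_int p q n * pq_int p q (n - 1)))"
proof -
  interpret pq_unit p q "q / p"
    using assms by unfold_locales auto
  show ?thesis
    using assms(4) mkz_durrmeyer_const mkz_durrmeyer_id_ge mkz_durrmeyer_id_le mkz_durrmeyer_square_le
    by auto
qed

end
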